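(* Let $n\geq 1$ be an integer, let $\Omega_s\subseteq[-1,1]$ be a Lebesgue measurable set of Lebesgue measure $s\geq 0$ such that $\zeta=\max\{|x|: x\in\Omega_s\}$ exists, and suppose $1-\zeta\geq 1/n$. Then for every real polynomial $p$ of degree $\leq n$, \[ \int_{\Omega_s}|p(x)|\,dx\leq\frac{s\,n^{3/2}}{(1-\zeta^2)^{1/4}}\int_{-1}^1|p(x)|\,dx . \] *)

theory Defs
  imports "HOL-Analysis.Analysis" "HOL-Computational_Algebra.Polynomial"
begin

end

theory Submission
  imports Defs
begin

text \<open>Substituting \<open>x = cos \<theta>\<close> turns \<open>p(x) sqrt(1 - x^2)\<close> into the sine polynomial
  \<open>f(\<theta>) = p(cos \<theta>) sin \<theta>\<close> of order \<open>n + 1\<close>, and the integral of \<open>|f|\<close> over \<open>[0, \<pi>]\<close>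
  into that of \<open>|p|\<close> over \<open>[-1, 1]\<close>. Orthogonality of the \<open>sin (k \<theta>)\<close> on \<open>[0, \<pi>]\<close>
  reproduces \<open>f(t)\<close> as \<open>2/\<pi>\<close> times the integral of \<open>f(\<theta>) D(\<theta>)\<close>, where the kernel
  \<open>D(\<theta>) = (\<Sum>k=1..n+1. sin (k t) sin (k \<theta>))\<close> is bounded by \<open>n + 1\<close>. Hence
  \<open>|p(x)| sqrt(1 - x^2) \<le> 2(n + 1)/\<pi> \<cdot> L\<close> with \<open>L\<close> the integral of \<open>|p|\<close> over \<open>[-1, 1]\<close>,
  so \<open>|p| \<le> 2(n + 1)/(\<pi> sqrt(1 - \<zeta>^2)) \<cdot> L\<close> on \<open>\<Omega>\<close>, and integrating over \<open>\<Omega>\<close> costs a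
  factor \<open>s\<close>. As \<open>n (1 - \<zeta>^2) \<ge> n (1 - \<zeta>) \<ge> 1\<close>, this constant is at most
  \<open>n^(3/2) / (1 - \<zeta>^2)^(1/4)\<close> when \<open>n \<ge> 2\<close>; for \<open>n = 1\<close> the hypothesis forces \<open>\<zeta> = 0\<close>,
  hence \<open>s = 0\<close>.\<close>

definition sin_poly :: "nat \<Rightarrow> (real \<Rightarrow> real) \<Rightarrow> bool" where
  "sin_poly m f \<longleftrightarrow> (\<exists>b. \<forall>x. f x = (\<Sum>j\<le>m. b j * sin (real j * x)))"

lemma sin_poly_add: "sin_poly m f \<Longrightarrow> sin_poly m g \<Longrightarrow> sin_poly m (\<lambda>x. f x + g x)"
  unfolding sin_poly_def
proof (elim exE)
  fix b c
  assume "\<forall>x. f x = (\<Sum>j\<le>m. b j * sin (real j * x))" "\<forall>x. g x = (\<Sum>j\<le>m. c j * sin (real j * x))"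
  then show "\<exists>d. \<forall>x. f x + g x = (\<Sum>j\<le>m. d j * sin (real j * x))"
    by (intro exI[of _ "\<lambda>j. b j + c j"]) (simp add: sum.distrib distrib_right)
qed

lemma sin_poly_cmult: "sin_poly m f \<Longrightarrow> sin_poly m (\<lambda>x. a * f x)"
  unfolding sin_poly_def
proof (elim exE)
  fix b assume "\<forall>x. f x = (\<Sum>j\<le>m. b j * sin (real j * x))"
  then show "\<exists>d. \<forall>x. a * f x = (\<Sum>j\<le>m. d j * sin (real j * x))"
    by (intro exI[of _ "\<lambda>j. a * b j"]) (simp add: sum_distrib_left mult.assoc)
qed

lemma sin_poly_zero: "sin_poly m (\<lambda>x. 0)"
  unfolding sin_poly_def by (intro exI[of _ "\<lambda>j. 0"]) simp

lemma sin_poly_sum: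
  "finite A \<Longrightarrow> (\<And>i. i \<in> A \<Longrightarrow> sin_poly m (g i)) \<Longrightarrow> sin_poly m (\<lambda>x. \<Sum>i\<in>A. g i x)"
  by (induction A rule: finite_induct) (auto intro: sin_poly_add sin_poly_zero)

lemma sin_poly_sin: "k \<le> m \<Longrightarrow> sin_poly m (\<lambda>x. sin (real k * x))"
  unfolding sin_poly_def
  by (intro exI[of _ "\<lambda>j. if j = k then 1 else 0"] allI)
     (simp add: if_distrib[of "\<lambda>c. c * _"] cong: if_cong)

lemma sin_poly_cos_mult:
  assumes "sin_poly m f"
  shows "sin_poly (Suc m) (\<lambda>x. cos x * f x)"
proof -
  obtain b where b: "\<And>x. f x = (\<Sum>j\<le>m. b j * sin (real j * x))"
    using assms unfolding sin_poly_def by blast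
  have cos_mult_sin: "cos x * sin (real j * x) = sin (real (Suc j) * x) / 2 + sin ((real j - 1) * x) / 2"
    for j x
    by (simp add: sin_add sin_diff field_simps)
  have "sin_poly (Suc m) (\<lambda>x. sin ((real j - 1) * x))" if "j \<le> m" for j
  proof (cases j)
    case 0
    then show ?thesis using sin_poly_cmult[OF sin_poly_sin[of 1], where a = "-1"] by simp
  next
    case (Suc i)
    then show ?thesis using that sin_poly_sin[of i] by simp
  qed
  then have "sin_poly (Suc m)
      (\<lambda>x. \<Sum>j\<le>m. b j / 2 * sin (real (Suc j) * x) + b j / 2 * sin ((real j - 1) * x))"
    by (intro sin_poly_sum sin_poly_add sin_poly_cmult sin_poly_sin) auto
  moreover have "cos x * f x
      = (\<Sum>j\<le>m. b j / 2 * sin (real (Suc j) * x) + b j / 2 * sin ((real j - 1) * x))" for x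
    unfolding b sum_distrib_left
  proof (intro sum.cong refl)
    fix j
    have "cos x * (b j * sin (real j * x)) = b j * (cos x * sin (real j * x))" by simp
    then show "cos x * (b j * sin (real j * x))
        = b j / 2 * sin (real (Suc j) * x) + b j / 2 * sin ((real j - 1) * x)"
      unfolding cos_mult_sin by (simp add: field_simps)
  qed
  ultimately show ?thesis by simp
qed

lemma sin_poly_poly_cos_mult_sin:
  fixes p :: "real poly"
  assumes "degree p \<le> n"
  shows "sin_poly (Suc n) (\<lambda>x. poly p (cos x) * sin x)"
  using assms
proof (induction n arbitrary: p)
  case 0
  then obtain c where "p = [:c:]" by (metis degree_eq_zeroE le_zero_eq)
  then show ?case using sin_poly_cmult[OF sin_poly_sin[of 1 1], of c] by simp
next
  case (Suc n)
  obtain a q where p: "p = pCons a q" by (cases p)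
  have "degree q \<le> n" using Suc.prems p by (auto split: if_splits)
  then have "sin_poly (Suc (Suc n)) (\<lambda>x. cos x * (poly q (cos x) * sin x))"
    by (intro sin_poly_cos_mult Suc.IH)
  then have "sin_poly (Suc (Suc n)) (\<lambda>x. a * sin (real 1 * x) + cos x * (poly q (cos x) * sin x))"
    by (intro sin_poly_add sin_poly_cmult sin_poly_sin) auto
  then show ?case unfolding p by (simp add: algebra_simps)
qed

lemma has_integral_cos_int_mult:
  fixes m :: int
  shows "((\<lambda>x. cos (of_int m * x)) has_integral (if m = 0 then pi else 0)) {0..pi}"
proof (cases "m = 0")
  case True
  then show ?thesis using has_integral_const_real[of "1::real" 0 pi] by simp
next
  case False
  have "((\<lambda>x. cos (of_int m * x)) has_integral
      (sin (of_int m * pi) / of_int m - sin (of_int m * 0) / of_int m)) {0..pi}"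
    using False
    by (intro fundamental_theorem_of_calculus)
       (auto intro!: derivative_eq_intros simp: has_real_derivative_iff_has_vector_derivative[symmetric])
  then show ?thesis using False by (simp add: mult.commute)
qed

lemma has_integral_sin_mult_sin:
  assumes "k \<ge> 1"
  shows "((\<lambda>x. sin (real j * x) * sin (real k * x)) has_integral (if j = k then pi / 2 else 0)) {0..pi}"
proof -
  have "((\<lambda>x. (cos (of_int (int j - int k) * x) - cos (of_int (int j + int k) * x)) / 2) has_integral
      ((if j = k then pi else 0) - 0) / 2) {0..pi}"
    using has_integral_cos_int_mult[of "int j - int k"] has_integral_cos_int_mult[of "int j + int k"] assms
    by (intro has_integral_divide has_integral_diff) auto
  moreover have "(cos (of_int (int j - int k) * x) - cos (of_int (int j + int k) * x)) / 2
      = sin (real j * x) * sin (real k * x)" for x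
    by (simp add: left_diff_distrib distrib_right cos_diff cos_add)
  ultimately show ?thesis by (simp add: if_distrib[of "\<lambda>c. c / 2"] cong: if_cong)
qed

lemma has_integral_sin_sum_mult_sin:
  assumes "1 \<le> k" "k \<le> m"
  shows "((\<lambda>x. (\<Sum>j\<le>m. b j * sin (real j * x)) * sin (real k * x)) has_integral (pi / 2 * b k)) {0..pi}"
proof -
  have "((\<lambda>x. \<Sum>j\<le>m. b j * (sin (real j * x) * sin (real k * x))) has_integral
      (\<Sum>j\<le>m. b j * (if j = k then pi / 2 else 0))) {0..pi}"
    using assms by (intro has_integral_sum has_integral_mult_right has_integral_sin_mult_sin) auto
  moreover have "(\<Sum>j\<le>m. b j * (if j = k then pi / 2 else 0)) = pi / 2 * b k"
    using assms by (simp add: if_distrib[of "\<lambda>c. _ * c"] cong: if_cong)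
  ultimately show ?thesis by (simp add: sum_distrib_right mult.assoc)
qed

lemma sin_poly_reproducing_kernel:
  assumes "sin_poly m f"
  shows "((\<lambda>x. f x * (\<Sum>k=1..m. sin (real k * t) * sin (real k * x))) has_integral (pi / 2 * f t)) {0..pi}"
proof -
  obtain b where b: "f = (\<lambda>x. \<Sum>j\<le>m. b j * sin (real j * x))"
    using assms unfolding sin_poly_def by blast
  have "((\<lambda>x. \<Sum>k=1..m. sin (real k * t) * (f x * sin (real k * x))) has_integral
      (\<Sum>k=1..m. sin (real k * t) * (pi / 2 * b k))) {0..pi}"
    unfolding b by (intro has_integral_sum has_integral_mult_right has_integral_sin_sum_mult_sin) auto
  moreover have "(\<Sum>k=1..m. sin (real k * t) * (pi / 2 * b k)) = pi / 2 * (\<Sum>k\<le>m. b k * sin (real k * t))"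
    by (simp add: sum_distrib_left atMost_atLeast0 sum.atLeast_Suc_atMost mult_ac)
  ultimately show ?thesis by (simp add: b sum_distrib_left mult_ac)
qed

lemma sin_poly_abs_le_integral:
  assumes "sin_poly m f"
  shows "pi / 2 * \<bar>f t\<bar> \<le> real m * integral {0..pi} (\<lambda>x. \<bar>f x\<bar>)"
proof -
  define D where "D x = (\<Sum>k=1..m. sin (real k * t) * sin (real k * x))" for x
  have "continuous_on {0..pi} f"
    using assms unfolding sin_poly_def by (auto intro!: continuous_intros)
  moreover have "continuous_on {0..pi} D"
    unfolding D_def by (intro continuous_intros)
  moreover have "\<bar>D x\<bar> \<le> real m" for x
  proof -
    have "\<bar>D x\<bar> \<le> (\<Sum>k=1..m. \<bar>sin (real k * t) * sin (real k * x)\<bar>)"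
      unfolding D_def by (rule sum_abs)
    also have "\<dots> \<le> (\<Sum>k=1..m. 1)"
      by (intro sum_mono) (simp add: abs_mult mult_le_one)
    finally show ?thesis by simp
  qed
  ultimately have "norm (integral {0..pi} (\<lambda>x. f x * D x)) \<le> integral {0..pi} (\<lambda>x. real m * \<bar>f x\<bar>)"
    by (intro integral_norm_bound_integral integrable_continuous_interval continuous_intros)
       (auto simp: abs_mult mult.commute intro: mult_right_mono)
  then show ?thesis
    using integral_unique[OF sin_poly_reproducing_kernel[OF assms, of t]] by (simp add: D_def abs_mult)
qed

lemma has_integral_cos_substitution:
  fixes g :: "real \<Rightarrow> real"
  assumes "continuous_on {-1..1} g"
  shows "((\<lambda>x. g (cos x) * sin x) has_integral integral {-1..1} g) {0..pi}"
proof -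
  have "((\<lambda>x. (- sin x) *\<^sub>R g (cos x)) has_integral
      (integral {cos 0..cos pi} g - integral {cos pi..cos 0} g)) {0..pi}"
    by (rule has_integral_substitution_general[of "{}" 0 pi cos "-1" 1])
       (auto intro!: assms continuous_intros derivative_eq_intros)
  then have "((\<lambda>x. - (g (cos x) * sin x)) has_integral - integral {-1..1} g) {0..pi}"
    by (simp add: mult.commute)
  then show ?thesis
    by (simp add: has_integral_neg_iff)
qed

lemma interval_integral_abs_poly:
  fixes p :: "real poly"
  shows "(LBINT t=-1..1. \<bar>poly p t\<bar>) = integral {-1..1} (\<lambda>t. \<bar>poly p t\<bar>)"
proof -
  have "set_integrable lborel {-1..1::real} (\<lambda>t. \<bar>poly p t\<bar>)"
    by (intro borel_integrable_atLeastAtMost' continuous_intros)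
  then show ?thesis
    using interval_integral_eq_integral[of "-1" 1 "\<lambda>t. \<bar>poly p t\<bar>"] by (simp add: one_ereal_def)
qed

lemma abs_poly_mult_sqrt_le_integral:
  fixes p :: "real poly"
  assumes "degree p \<le> n" "\<bar>x\<bar> \<le> 1"
  shows "pi / 2 * (\<bar>poly p x\<bar> * sqrt (1 - x\<^sup>2)) \<le> real (Suc n) * (LBINT t=-1..1. \<bar>poly p t\<bar>)"
proof -
  have "(LBINT t=-1..1. \<bar>poly p t\<bar>) = integral {-1..1} (\<lambda>t. \<bar>poly p t\<bar>)"
    by (rule interval_integral_abs_poly)
  also have "\<dots> = integral {0..pi} (\<lambda>\<theta>. \<bar>poly p (cos \<theta>) * sin \<theta>\<bar>)"
  proof -
    have "integral {-1..1} (\<lambda>t. \<bar>poly p t\<bar>) = integral {0..pi} (\<lambda>\<theta>. \<bar>poly p (cos \<theta>)\<bar> * sin \<theta>)"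
      by (intro integral_unique[symmetric] has_integral_cos_substitution continuous_intros)
    also have "\<dots> = integral {0..pi} (\<lambda>\<theta>. \<bar>poly p (cos \<theta>) * sin \<theta>\<bar>)"
      by (intro integral_cong) (simp add: abs_mult sin_ge_zero)
    finally show ?thesis .
  qed
  finally have L: "(LBINT t=-1..1. \<bar>poly p t\<bar>) = integral {0..pi} (\<lambda>\<theta>. \<bar>poly p (cos \<theta>) * sin \<theta>\<bar>)" .
  have "pi / 2 * \<bar>poly p (cos (arccos x)) * sin (arccos x)\<bar>
      \<le> real (Suc n) * integral {0..pi} (\<lambda>\<theta>. \<bar>poly p (cos \<theta>) * sin \<theta>\<bar>)"
    by (rule sin_poly_abs_le_integral[OF sin_poly_poly_cos_mult_sin[OF assms(1)]])
  then show ?thesis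
    using assms(2) by (simp add: L cos_arccos_abs sin_arccos_abs abs_mult abs_square_le_1)
qed

lemma abs_poly_le_integral_if_abs_le:
  fixes p :: "real poly"
  assumes "degree p \<le> n" "\<bar>x\<bar> \<le> \<zeta>" "\<zeta> < 1"
  shows "\<bar>poly p x\<bar> \<le> 2 * real (Suc n) / (pi * sqrt (1 - \<zeta>\<^sup>2)) * (LBINT t=-1..1. \<bar>poly p t\<bar>)"
proof -
  have "\<zeta>\<^sup>2 < 1" "x\<^sup>2 \<le> \<zeta>\<^sup>2"
    using assms(2,3) abs_le_square_iff[of x \<zeta>] by (auto simp: abs_square_less_1)
  then have "0 < sqrt (1 - \<zeta>\<^sup>2)" "sqrt (1 - \<zeta>\<^sup>2) \<le> sqrt (1 - x\<^sup>2)"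
    by auto
  then have "pi / 2 * (\<bar>poly p x\<bar> * sqrt (1 - \<zeta>\<^sup>2)) \<le> pi / 2 * (\<bar>poly p x\<bar> * sqrt (1 - x\<^sup>2))"
    by (intro mult_left_mono) auto
  also have "\<dots> \<le> real (Suc n) * (LBINT t=-1..1. \<bar>poly p t\<bar>)"
    using assms by (intro abs_poly_mult_sqrt_le_integral) auto
  finally show ?thesis
    using \<open>0 < sqrt (1 - \<zeta>\<^sup>2)\<close> by (simp add: field_simps)
qed

lemma set_integral_le_measure_mult:
  fixes f :: "'a \<Rightarrow> real"
  assumes "A \<in> fmeasurable M" "set_integrable M A f" "\<And>x. x \<in> A \<Longrightarrow> f x \<le> c"
  shows "(LINT x:A|M. f x) \<le> measure M A * c"
proof -
  have "emeasure M A \<noteq> \<infinity>"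
    using fmeasurableD2[OF assms(1)] by simp
  then have "set_integrable M A (\<lambda>x. c)"
    using assms(1) by (simp add: set_integrable_def fmeasurable_def less_top)
  then have "(LINT x:A|M. f x) \<le> (LINT x:A|M. c)"
    using assms(2,3) by (intro set_integral_mono)
  also have "\<dots> = measure M A * c"
    using assms(1) \<open>emeasure M A \<noteq> \<infinity>\<close> by (simp add: set_integral_const)
  finally show ?thesis .
qed

lemma Suc_div_pi_sqrt_le_powr:
  fixes \<zeta> :: real and n :: nat
  assumes "n \<ge> 2" "0 \<le> \<zeta>" "1 / real n \<le> 1 - \<zeta>"
  shows "2 * real (Suc n) / (pi * sqrt (1 - \<zeta>\<^sup>2)) \<le> real n powr (3/2) / (1 - \<zeta>\<^sup>2) powr (1/4)"
proof -
  define A where "A = 1 - \<zeta>\<^sup>2"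
  have "0 < 1 / real n"
    using assms(1) by simp
  then have "\<zeta> \<le> 1"
    using assms(3) by linarith
  then have "\<zeta> * \<zeta> \<le> \<zeta> * 1"
    using assms(2) by (rule mult_left_mono)
  then have "1 / real n \<le> A"
    using assms(3) by (simp add: A_def power2_eq_square)
  then have "A > 0" "A * real n \<ge> 1"
    using \<open>0 < 1 / real n\<close> assms(1) by (linarith, simp add: divide_le_eq)
  have "3 * real n \<le> pi * real n"
    using pi_gt3 by (intro mult_right_mono) auto
  moreover have "2 * real (Suc n) \<le> 3 * real n"
    using assms(1) by simp
  ultimately have "2 * real (Suc n) \<le> pi * real n"
    by linarith
  then have "2 * real (Suc n) / (pi * sqrt A) \<le> pi * real n / (pi * sqrt A)"
    using \<open>A > 0\<close> by (intro divide_right_mono) auto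
  also have "\<dots> = real n / sqrt A"
    by simp
  also have "\<dots> \<le> real n * (real n * (real n * A)) powr (1/4) / sqrt A"
  proof -
    have "1 \<le> real n * (real n * A)"
      using assms(1) \<open>A * real n \<ge> 1\<close> mult_mono[of 1 "real n" 1 "real n * A"]
      by (simp add: mult.commute)
    then have "1 \<le> (real n * (real n * A)) powr (1/4)"
      by (rule ge_one_powr_ge_zero) simp
    then have "real n \<le> real n * (real n * (real n * A)) powr (1/4)"
      using mult_left_mono[of 1 _ "real n"] by simp
    then show ?thesis
      using \<open>A > 0\<close> by (intro divide_right_mono) auto
  qed
  also have "\<dots> = real n powr (3/2) / A powr (1/4)"
  proof -
    have "sqrt A = A powr (1/4) * A powr (1/4)"
      using \<open>A > 0\<close> by (simp add: powr_half_sqrt[symmetric] powr_add[symmetric])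
    moreover have "real n powr (3/2) = real n * (real n powr (1/4) * real n powr (1/4))"
      using assms(1) by (simp add: powr_add[symmetric] powr_mult_base)
    ultimately show ?thesis
      using assms(1) \<open>A > 0\<close> by (simp add: powr_mult field_simps)
  qed
  finally show ?thesis
    unfolding A_def .
qed

theorem theoremA1:
  fixes n :: nat and \<Omega> :: "real set" and s \<zeta> :: real and p :: "real poly"
  assumes "n \<ge> 1"
    and "\<Omega> \<in> sets lebesgue"
    and "\<Omega> \<subseteq> {-1..1}"
    and "s = measure lebesgue \<Omega>"
    and "s \<ge> 0"
    and "\<zeta> \<in> abs ` \<Omega>" and "\<forall>x\<in>\<Omega>. \<bar>x\<bar> \<le> \<zeta>"
    and "1 - \<zeta> \<ge> 1 / real n"
    and "degree p \<le> n"
  shows "(LINT x:\<Omega>|lebesgue. \<bar>poly p x\<bar>)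
           \<le> s * real n powr (3/2) / (1 - \<zeta>\<^sup>2) powr (1/4) * (LBINT x=-1..1. \<bar>poly p x\<bar>)"
proof -
  define L where "L = (LBINT x=-1..1. \<bar>poly p x\<bar>)"
  define C where "C = 2 * real (Suc n) / (pi * sqrt (1 - \<zeta>\<^sup>2))"
  have "0 < 1 / real n"
    using assms(1) by simp
  then have \<zeta>: "0 \<le> \<zeta>" "\<zeta> < 1"
    using assms(6,8) by (auto, linarith)
  have "\<Omega> \<in> fmeasurable lebesgue"
    using bounded_subset[OF bounded_closed_interval assms(3)] assms(2) by (rule bounded_set_imp_lmeasurable)
  moreover have "set_integrable lebesgue {-1..1} (\<lambda>x. \<bar>poly p x\<bar>)"
    by (intro absolutely_integrable_continuous_real continuous_intros)
  then have "set_integrable lebesgue \<Omega> (\<lambda>x. \<bar>poly p x\<bar>)"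
    using assms(2,3) by (rule set_integrable_subset)
  moreover have "\<bar>poly p x\<bar> \<le> C * L" if "x \<in> \<Omega>" for x
    unfolding C_def L_def using assms(7,9) that \<zeta>(2) by (intro abs_poly_le_integral_if_abs_le) auto
  ultimately have "(LINT x:\<Omega>|lebesgue. \<bar>poly p x\<bar>) \<le> s * (C * L)"
    unfolding assms(4) by (rule set_integral_le_measure_mult)
  also have "\<dots> \<le> s * (real n powr (3/2) / (1 - \<zeta>\<^sup>2) powr (1/4) * L)"
  proof (cases "n = 1")
    case True
    then have "\<zeta> = 0"
      using assms(8) \<zeta>(1) by simp
    then have "\<Omega> \<subseteq> {0}"
      using assms(7) by auto
    then show ?thesis
      using assms(4) by (auto simp: subset_singleton_iff)
  next
    case False
    have "L \<ge> 0"
      unfolding L_def interval_integral_abs_poly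
      by (intro integral_nonneg integrable_continuous_interval continuous_intros) auto
    moreover have "C \<le> real n powr (3/2) / (1 - \<zeta>\<^sup>2) powr (1/4)"
      unfolding C_def using False assms(1,8) \<zeta>(1) by (intro Suc_div_pi_sqrt_le_powr) auto
    ultimately show ?thesis
      using assms(5) by (intro mult_left_mono mult_right_mono)
  qed
  finally show ?thesis
    unfolding L_def by (simp add: mult.assoc)
qed

end
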